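(* Let $h=h_{\bar 0}\oplus h_{\bar 1}$, $J$, $P$, $q$ and $\tilde h=Ph$ be as described in the context. Let ${\cal A}_{SSR}$ be the self-dual canonical super commutation relations algebra over $h$ and ${\cal A}_{CSR}$ the canonical super commutation relations algebra over $\tilde h$, both as defined in the context. Then ${\cal A}_{SSR}$ and ${\cal A}_{CSR}$ are $\ast$-isomorphic.
   Context: $h_{\bar 0}$ (boson space) and $h_{\bar 1}$ (fermion space) are complex, infinite-dimensional, separable Hilbert spaces and $h=h_{\bar 0}\oplus h_{\bar 1}$ with scalar product $(\cdot,\cdot)$ (antilinear in the first argument). $P_\alpha$ ($\alpha\in\{\bar 0,\bar 1\}={\bf Z}_2$) is the orthogonal projection onto $h_\alpha$ and $\gamma=P_{\bar 0}-P_{\bar 1}$. A vector $f\in h_\alpha$ is homogeneous of degree $\mathrm{deg}(f)=\alpha$. For homogeneous elements $v,w$ of a ${\bf Z}_2$-graded algebra, $\langle v,w\rangle=\mathrm{deg}(v)\cdot\mathrm{deg}(w)$ and the supercommutator is $[v,w]_s=vw-(-1)^{\langle v,w\rangle}wv$, extended bilinearly. $J$ is an even conjugation on $h$ (antilinear, norm-preserving, $J^2=1$, $J\gamma=\gamma J$). $P$ is an orthogonal projection on $h$ commuting with $\gamma$ and satisfying $JP=(1-P)J$. Put $q=P-\gamma(1-P)$ and $\tilde h=Ph$ (a graded Hilbert space with $\tilde h_\alpha=P_\alpha\tilde h$); $\ast$ on vectors/operators denotes the Hilbert adjoint. ${\cal A}_{SSR}$ is the complex $\ast$-algebra generated by an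 identity ${\bf 1}$ and symbols $B^\dagger(f),B(f)$, $f\in h$, subject to the relations: $B^\dagger(c_1f_1+c_2f_2)=c_1B^\dagger(f_1)+c_2B^\dagger(f_2)$; $B^\dagger(f)=B(qf)^\ast$; $[B(f_1),B^\dagger(f_2)]_s=(f_1,f_2){\bf 1}$; $B(f)=B^\dagger(qJf)$; with grading $\mathrm{deg}(B^\dagger(f))=\mathrm{deg}(f)$ for homogeneous $f$. ${\cal A}_{CSR}$ is the complex $\ast$-algebra generated by an identity ${\bf 1}$ and symbols $a^\dagger(\tilde f),a(\tilde f)$, $\tilde f\in\tilde h$, subject to: $a^\dagger(c_1\tilde f_1+c_2\tilde f_2)=c_1a^\dagger(\tilde f_1)+c_2a^\dagger(\tilde f_2)$; $a^\dagger(\tilde f)=a(\tilde f)^\ast$; $[a(\tilde f_1),a^\dagger(\tilde f_2)]_s=(\tilde f_1,\tilde f_2){\bf 1}$; $[a(\tilde f_1),a(\tilde f_2)]_s=0$; with $\mathrm{deg}(a^\dagger(\tilde f))=\mathrm{deg}(\tilde f)$ for homogeneous $\tilde f$. *)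

theory Defs
  imports Complex_Main "HOL-Library.Countable_Set"
begin

text \<open>A complex vector space structure is given by a scalar multiplication
  smul on an abelian group 'h; ip is the scalar product, antilinear in the first argument.\<close>

definition hnorm :: "('h \<Rightarrow> 'h \<Rightarrow> complex) \<Rightarrow> 'h \<Rightarrow> real" where
  "hnorm ip x = sqrt (Re (ip x x))"

definition inner_product_space ::
  "(complex \<Rightarrow> 'h::ab_group_add \<Rightarrow> 'h) \<Rightarrow> ('h \<Rightarrow> 'h \<Rightarrow> complex) \<Rightarrow> bool" where
  "inner_product_space smul ip \<longleftrightarrow>
     vector_space smul \<and>
     (\<forall>x y z. ip x (y + z) = ip x y + ip x z) \<and>
     (\<forall>x y c. ip x (smul c y) = c * ip x y) \<and>
     (\<forall>x y. ip y x = cnj (ip x y)) \<and>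
     (\<forall>x. 0 \<le> Re (ip x x)) \<and>
     (\<forall>x. ip x x = 0 \<longrightarrow> x = 0)"

definition complete_ips :: "('h::ab_group_add \<Rightarrow> 'h \<Rightarrow> complex) \<Rightarrow> bool" where
  "complete_ips ip \<longleftrightarrow>
     (\<forall>s::nat \<Rightarrow> 'h.
        (\<forall>e>0. \<exists>N. \<forall>m\<ge>N. \<forall>n\<ge>N. hnorm ip (s m - s n) < e) \<longrightarrow>
        (\<exists>x. \<forall>e>0. \<exists>N. \<forall>n\<ge>N. hnorm ip (s n - x) < e))"

definition separable_subset :: "('h::ab_group_add \<Rightarrow> 'h \<Rightarrow> complex) \<Rightarrow> 'h set \<Rightarrow> bool" where
  "separable_subset ip H \<longleftrightarrow>
     (\<exists>D. countable D \<and> D \<subseteq> H \<and> (\<forall>x\<in>H. \<forall>e>0. \<exists>d\<in>D. hnorm ip (x - d) < e))"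

definition infinite_dim_subspace :: "(complex \<Rightarrow> 'h::ab_group_add \<Rightarrow> 'h) \<Rightarrow> 'h set \<Rightarrow> bool" where
  "infinite_dim_subspace smul H \<longleftrightarrow>
     module.subspace smul H \<and> (\<forall>S. finite S \<longrightarrow> S \<subseteq> H \<longrightarrow> \<not> H \<subseteq> module.span smul S)"

text \<open>h = h0 (+) h1: a complex Hilbert space which is the orthogonal direct sum of the
  separable infinite-dimensional closed subspaces H0 (bosons) and H1 (fermions).\<close>

definition graded_hilbert ::
  "(complex \<Rightarrow> 'h::ab_group_add \<Rightarrow> 'h) \<Rightarrow> ('h \<Rightarrow> 'h \<Rightarrow> complex) \<Rightarrow> 'h set \<Rightarrow> 'h set \<Rightarrow> bool" where
  "graded_hilbert smul ip H0 H1 \<longleftrightarrow>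
     inner_product_space smul ip \<and> complete_ips ip \<and>
     infinite_dim_subspace smul H0 \<and> infinite_dim_subspace smul H1 \<and>
     separable_subset ip H0 \<and> separable_subset ip H1 \<and>
     (\<forall>x\<in>H0. \<forall>y\<in>H1. ip x y = 0) \<and>
     (\<forall>x. \<exists>a\<in>H0. \<exists>b\<in>H1. x = a + b)"

definition proj0 :: "'h set \<Rightarrow> 'h set \<Rightarrow> 'h::ab_group_add \<Rightarrow> 'h" where
  "proj0 H0 H1 x = (THE a. a \<in> H0 \<and> x - a \<in> H1)"

definition gam :: "'h set \<Rightarrow> 'h set \<Rightarrow> 'h::ab_group_add \<Rightarrow> 'h" where
  "gam H0 H1 x = proj0 H0 H1 x - (x - proj0 H0 H1 x)"

definition even_conjugation ::
  "(complex \<Rightarrow> 'h::ab_group_add \<Rightarrow> 'h) \<Rightarrow> ('h \<Rightarrow> 'h \<Rightarrow> complex) \<Rightarrow> 'h set \<Rightarrow> 'h set \<Rightarrow> ('h \<Rightarrow> 'h) \<Rightarrow> bool" where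
  "even_conjugation smul ip H0 H1 J \<longleftrightarrow>
     (\<forall>x y. J (x + y) = J x + J y) \<and>
     (\<forall>c x. J (smul c x) = smul (cnj c) (J x)) \<and>
     (\<forall>x. hnorm ip (J x) = hnorm ip x) \<and>
     (\<forall>x. J (J x) = x) \<and>
     (\<forall>x. J (gam H0 H1 x) = gam H0 H1 (J x))"

definition even_orth_projection ::
  "(complex \<Rightarrow> 'h::ab_group_add \<Rightarrow> 'h) \<Rightarrow> ('h \<Rightarrow> 'h \<Rightarrow> complex) \<Rightarrow> 'h set \<Rightarrow> 'h set \<Rightarrow> ('h \<Rightarrow> 'h) \<Rightarrow> bool" where
  "even_orth_projection smul ip H0 H1 P \<longleftrightarrow>
     (\<forall>x y. P (x + y) = P x + P y) \<and>
     (\<forall>c x. P (smul c x) = smul c (P x)) \<and>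
     (\<forall>x. P (P x) = P x) \<and>
     (\<forall>x y. ip (P x) y = ip x (P y)) \<and>
     (\<forall>x. P (gam H0 H1 x) = gam H0 H1 (P x))"

definition qop :: "'h set \<Rightarrow> 'h set \<Rightarrow> ('h::ab_group_add \<Rightarrow> 'h) \<Rightarrow> 'h \<Rightarrow> 'h" where
  "qop H0 H1 P x = P x - gam H0 H1 (x - P x)"

text \<open>Homogeneous vectors: deg a, with False = even (bar 0), True = odd (bar 1).\<close>

definition homog :: "'h set \<Rightarrow> 'h set \<Rightarrow> bool \<Rightarrow> 'h \<Rightarrow> bool" where
  "homog H0 H1 a f \<longleftrightarrow> (if a then f \<in> H1 else f \<in> H0)"

definition ssign :: "bool \<Rightarrow> bool \<Rightarrow> complex" where
  "ssign a b = (if a \<and> b then -1 else 1)"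

text \<open>Elements are finitely supported functions from words to complex coefficients.
  A letter (g, False) is the generator g, a letter (g, True) is the formal adjoint g*.\<close>

type_synonym 'g fsa = "('g \<times> bool) list \<Rightarrow> complex"

definition fa_add :: "'g fsa \<Rightarrow> 'g fsa \<Rightarrow> 'g fsa" where
  "fa_add p q = (\<lambda>w. p w + q w)"

definition fa_smul :: "complex \<Rightarrow> 'g fsa \<Rightarrow> 'g fsa" where
  "fa_smul c p = (\<lambda>w. c * p w)"

definition fa_diff :: "'g fsa \<Rightarrow> 'g fsa \<Rightarrow> 'g fsa" where
  "fa_diff p q = (\<lambda>w. p w - q w)"

definition fa_zero :: "'g fsa" where
  "fa_zero = (\<lambda>w. 0)"

definition fa_one :: "'g fsa" where
  "fa_one = (\<lambda>w. if w = [] then 1 else 0)"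

definition fa_mult :: "'g fsa \<Rightarrow> 'g fsa \<Rightarrow> 'g fsa" where
  "fa_mult p q = (\<lambda>w. \<Sum>i\<le>length w. p (take i w) * q (drop i w))"

definition fa_star :: "'g fsa \<Rightarrow> 'g fsa" where
  "fa_star p = (\<lambda>w. cnj (p (rev (map (\<lambda>(g, b). (g, \<not> b)) w))))"

definition fa_gen :: "'g \<Rightarrow> 'g fsa" where
  "fa_gen g = (\<lambda>w. if w = [(g, False)] then 1 else 0)"

definition free_star_alg :: "'g set \<Rightarrow> 'g fsa set" where
  "free_star_alg G = {p. finite {w. p w \<noteq> 0} \<and> (\<forall>w. p w \<noteq> 0 \<longrightarrow> (\<forall>l\<in>set w. fst l \<in> G))}"

inductive_set star_ideal :: "'g set \<Rightarrow> 'g fsa set \<Rightarrow> 'g fsa set" for G R where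
  gen: "r \<in> R \<Longrightarrow> r \<in> star_ideal G R"
| zero: "fa_zero \<in> star_ideal G R"
| add: "x \<in> star_ideal G R \<Longrightarrow> y \<in> star_ideal G R \<Longrightarrow> fa_add x y \<in> star_ideal G R"
| smul: "x \<in> star_ideal G R \<Longrightarrow> fa_smul c x \<in> star_ideal G R"
| star: "x \<in> star_ideal G R \<Longrightarrow> fa_star x \<in> star_ideal G R"
| multl: "x \<in> star_ideal G R \<Longrightarrow> a \<in> free_star_alg G \<Longrightarrow> fa_mult a x \<in> star_ideal G R"
| multr: "x \<in> star_ideal G R \<Longrightarrow> a \<in> free_star_alg G \<Longrightarrow> fa_mult x a \<in> star_ideal G R"

text \<open>The quotient *-algebras free_star_alg G1 / I1 and free_star_alg G2 / I2 are
  *-isomorphic: there is a map Phi on representatives inducing a well-defined, bijective,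
  unital, linear, multiplicative and *-preserving map of the quotients.
  (Congruence mod I is  p ~ q  iff  p - q in I.)\<close>

definition quot_star_isomorphic ::
  "'g set \<Rightarrow> 'g fsa set \<Rightarrow> 'k set \<Rightarrow> 'k fsa set \<Rightarrow> bool" where
  "quot_star_isomorphic G1 I1 G2 I2 \<longleftrightarrow>
    (\<exists>\<Phi>. (\<forall>x\<in>free_star_alg G1. \<Phi> x \<in> free_star_alg G2) \<and>
         (\<forall>x\<in>free_star_alg G1. \<forall>y\<in>free_star_alg G1.
             fa_diff (\<Phi> (fa_add x y)) (fa_add (\<Phi> x) (\<Phi> y)) \<in> I2) \<and>
         (\<forall>c. \<forall>x\<in>free_star_alg G1. fa_diff (\<Phi> (fa_smul c x)) (fa_smul c (\<Phi> x)) \<in> I2) \<and>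
         (\<forall>x\<in>free_star_alg G1. \<forall>y\<in>free_star_alg G1.
             fa_diff (\<Phi> (fa_mult x y)) (fa_mult (\<Phi> x) (\<Phi> y)) \<in> I2) \<and>
         (\<forall>x\<in>free_star_alg G1. fa_diff (\<Phi> (fa_star x)) (fa_star (\<Phi> x)) \<in> I2) \<and>
         fa_diff (\<Phi> fa_one) fa_one \<in> I2 \<and>
         (\<forall>x\<in>free_star_alg G1. \<Phi> x \<in> I2 \<longleftrightarrow> x \<in> I1) \<and>
         (\<forall>y\<in>free_star_alg G2. \<exists>x\<in>free_star_alg G1. fa_diff (\<Phi> x) y \<in> I2))"

datatype 'h cgen = Cr 'h | An 'h  \<comment> \<open>Cr f = B^dagger(f) resp. a^dagger(f); An f = B(f) resp. a(f)\<close>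

definition ssr_relations ::
  "(complex \<Rightarrow> 'h::ab_group_add \<Rightarrow> 'h) \<Rightarrow> ('h \<Rightarrow> 'h \<Rightarrow> complex) \<Rightarrow> 'h set \<Rightarrow> 'h set
   \<Rightarrow> ('h \<Rightarrow> 'h) \<Rightarrow> ('h \<Rightarrow> 'h) \<Rightarrow> 'h cgen fsa set" where
  "ssr_relations smul ip H0 H1 J P =
     {fa_diff (fa_gen (Cr (smul c1 f1 + smul c2 f2)))
              (fa_add (fa_smul c1 (fa_gen (Cr f1))) (fa_smul c2 (fa_gen (Cr f2)))) | c1 c2 f1 f2. True}
   \<union> {fa_diff (fa_gen (Cr f)) (fa_star (fa_gen (An (qop H0 H1 P f)))) | f. True}
   \<union> {fa_diff (fa_diff (fa_mult (fa_gen (An f1)) (fa_gen (Cr f2)))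
                       (fa_smul (ssign a b) (fa_mult (fa_gen (Cr f2)) (fa_gen (An f1)))))
              (fa_smul (ip f1 f2) fa_one) | a b f1 f2. homog H0 H1 a f1 \<and> homog H0 H1 b f2}
   \<union> {fa_diff (fa_gen (An f)) (fa_gen (Cr (qop H0 H1 P (J f)))) | f. True}"

definition csr_gens :: "('h \<Rightarrow> 'h) \<Rightarrow> 'h cgen set" where
  "csr_gens P = {Cr f | f. f \<in> range P} \<union> {An f | f. f \<in> range P}"

definition csr_relations ::
  "(complex \<Rightarrow> 'h::ab_group_add \<Rightarrow> 'h) \<Rightarrow> ('h \<Rightarrow> 'h \<Rightarrow> complex) \<Rightarrow> 'h set \<Rightarrow> 'h set
   \<Rightarrow> ('h \<Rightarrow> 'h) \<Rightarrow> 'h cgen fsa set" where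
  "csr_relations smul ip H0 H1 P =
     {fa_diff (fa_gen (Cr (smul c1 f1 + smul c2 f2)))
              (fa_add (fa_smul c1 (fa_gen (Cr f1))) (fa_smul c2 (fa_gen (Cr f2))))
        | c1 c2 f1 f2. f1 \<in> range P \<and> f2 \<in> range P}
   \<union> {fa_diff (fa_gen (Cr f)) (fa_star (fa_gen (An f))) | f. f \<in> range P}
   \<union> {fa_diff (fa_diff (fa_mult (fa_gen (An f1)) (fa_gen (Cr f2)))
                       (fa_smul (ssign a b) (fa_mult (fa_gen (Cr f2)) (fa_gen (An f1)))))
              (fa_smul (ip f1 f2) fa_one)
        | a b f1 f2. f1 \<in> range P \<and> f2 \<in> range P \<and> homog H0 H1 a f1 \<and> homog H0 H1 b f2}
   \<union> {fa_diff (fa_mult (fa_gen (An f1)) (fa_gen (An f2)))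
              (fa_smul (ssign a b) (fa_mult (fa_gen (An f2)) (fa_gen (An f1))))
        | a b f1 f2. f1 \<in> range P \<and> f2 \<in> range P \<and> homog H0 H1 a f1 \<and> homog H0 H1 b f2}"

end

theory Submission
  imports Defs "HOL-Library.Function_Algebras"
begin

(* Since JP = (1 - P)J, every vector f splits as Pf + (1 - P)f with (1 - P)f = J(PJf), and the
  SSR relation B(f) = B^dagger(qJf) turns the creation part B^dagger((1 - P)f) into an
  annihilator of the vector P gamma J f of the subspace Ph. This suggests the assignment
    B^dagger(f) |-> a^dagger(Pf) - a(P gamma J f),     B(f) |-> a^dagger(PJf) + a(Pf).
  Extended to the free *-algebra it maps each SSR relation into the CSR ideal; the key point
  is the identity (Pf1, Pf2) + (-1)^<f1,f2> (P gamma J f2, PJf1) = (f1, f2) for homogeneous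
  f1, f2. Conversely the CSR relations on the generators B^dagger(f), B(f), f in Ph, already
  hold in A_SSR. Finally, the image of every generator is congruent to the generator itself,
  modulo the SSR ideal and, for generators from Ph, modulo the CSR ideal; hence the induced
  *-homomorphism of the quotients is injective and surjective. *)

section \<open>The free unital *-algebra\<close>

lemma fa_add_eq_plus: "fa_add p q = p + q"
  by (auto simp: fa_add_def)

lemma fa_diff_eq_minus: "fa_diff p q = p - q"
  by (auto simp: fa_diff_def)

lemma fa_zero_eq_zero: "fa_zero = 0"
  by (auto simp: fa_zero_def)

lemma sum_fun_apply: "(\<Sum>i\<in>I. f i) x = (\<Sum>i\<in>I. f i x)"
  by (induct I rule: infinite_finite_induct) auto

definition supp :: "'g fsa \<Rightarrow> ('g \<times> bool) list set" where
  "supp p = {w. p w \<noteq> 0}"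

definition fa_word :: "('g \<times> bool) list \<Rightarrow> 'g fsa" where
  "fa_word u = (\<lambda>v. if v = u then 1 else 0)"

definition word_star :: "('g \<times> bool) list \<Rightarrow> ('g \<times> bool) list" where
  "word_star w = rev (map (\<lambda>(g, b). (g, \<not> b)) w)"

definition splits :: "'a list \<Rightarrow> ('a list \<times> 'a list) set" where
  "splits w = {(u, v). u @ v = w}"

definition words :: "'g set \<Rightarrow> ('g \<times> bool) list set" where
  "words G = {w. \<forall>l\<in>set w. fst l \<in> G}"

lemma word_star_word_star [simp]: "word_star (word_star w) = w"
  by (induct w) (auto simp: word_star_def rev_map case_prod_beta)

lemma word_star_append [simp]: "word_star (u @ v) = word_star v @ word_star u"
  by (simp add: word_star_def)

lemma word_star_Nil [simp]: "word_star [] = []"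
  by (simp add: word_star_def)

lemma word_star_eq_iff: "word_star w = u \<longleftrightarrow> w = word_star u"
  by (metis word_star_word_star)

lemma append_eq_word_star_iff: "u @ v = word_star w \<longleftrightarrow> word_star v @ word_star u = w"
  by (metis word_star_append word_star_word_star)

lemma fa_star_apply: "fa_star p w = cnj (p (word_star w))"
  by (simp add: fa_star_def word_star_def)

lemma splits_eq_image: "splits w = (\<lambda>i. (take i w, drop i w)) ` {..length w}"
proof -
  have "(u, v) \<in> (\<lambda>i. (take i w, drop i w)) ` {..length w}" if "u @ v = w" for u v
    using that by (auto intro!: image_eqI[where x="length u"])
  then show ?thesis
    unfolding splits_def by auto
qed

lemma finite_splits [simp]: "finite (splits w)"
  unfolding splits_eq_image by simp

lemma fa_mult_splits: "fa_mult p q w = (\<Sum>s\<in>splits w. p (fst s) * q (snd s))"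
proof -
  have "inj_on (\<lambda>i. (take i w, drop i w)) {..length w}"
    by (auto simp: inj_on_def) (metis length_take min.absorb2)
  then show ?thesis
    unfolding splits_eq_image fa_mult_def by (simp add: sum.reindex)
qed

lemma fa_mult_assoc: "fa_mult (fa_mult p q) r = fa_mult p (fa_mult q r)"
proof
  fix w
  have "fa_mult (fa_mult p q) r w =
        (\<Sum>t\<in>Sigma (splits w) (\<lambda>xz. splits (fst xz)).
           p (fst (snd t)) * q (snd (snd t)) * r (snd (fst t)))"
    by (simp add: fa_mult_splits sum_distrib_right sum.Sigma case_prod_beta)
  also have "\<dots> = (\<Sum>t\<in>Sigma (splits w) (\<lambda>uy. splits (snd uy)).
        p (fst (fst t)) * (q (fst (snd t)) * r (snd (snd t))))"
    by (rule sum.reindex_bij_witness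
          [where i="\<lambda>t. ((fst (fst t) @ fst (snd t), snd (snd t)), (fst (fst t), fst (snd t)))"
             and j="\<lambda>t. ((fst (snd t), snd (snd t) @ snd (fst t)), (snd (snd t), snd (fst t)))"])
       (auto simp: splits_def)
  also have "\<dots> = fa_mult p (fa_mult q r) w"
    by (simp add: fa_mult_splits sum_distrib_left sum.Sigma case_prod_beta)
  finally show "fa_mult (fa_mult p q) r w = fa_mult p (fa_mult q r) w" .
qed

lemma fa_star_mult: "fa_star (fa_mult p q) = fa_mult (fa_star q) (fa_star p)"
proof
  fix w
  have "fa_star (fa_mult p q) w =
        (\<Sum>s\<in>splits (word_star w). cnj (p (fst s)) * cnj (q (snd s)))"
    by (simp add: fa_star_apply fa_mult_splits)
  also have "\<dots> = (\<Sum>s\<in>splits w. cnj (q (word_star (fst s))) * cnj (p (word_star (snd s))))"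
    by (rule sum.reindex_bij_witness[where i="\<lambda>s. (word_star (snd s), word_star (fst s))"
          and j="\<lambda>s. (word_star (snd s), word_star (fst s))"])
       (auto simp: splits_def append_eq_word_star_iff)
  also have "\<dots> = fa_mult (fa_star q) (fa_star p) w"
    by (simp add: fa_star_apply fa_mult_splits)
  finally show "fa_star (fa_mult p q) w = fa_mult (fa_star q) (fa_star p) w" .
qed

lemma fa_star_star [simp]: "fa_star (fa_star p) = p"
  by (auto simp: fa_star_apply)

lemma fa_one_eq_word: "fa_one = fa_word []"
  by (auto simp: fa_one_def fa_word_def)

lemma fa_gen_eq_word: "fa_gen g = fa_word [(g, False)]"
  by (auto simp: fa_gen_def fa_word_def)

lemma fa_mult_word: "fa_mult (fa_word u) (fa_word v) = fa_word (u @ v)"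
proof
  fix w
  have "fa_mult (fa_word u) (fa_word v) w = (\<Sum>s\<in>splits w. if s = (u, v) then 1 else 0)"
    unfolding fa_mult_splits by (rule sum.cong) (auto simp: fa_word_def prod_eq_iff)
  also have "\<dots> = fa_word (u @ v) w"
    by (subst sum.delta[OF finite_splits]) (auto simp: fa_word_def splits_def)
  finally show "fa_mult (fa_word u) (fa_word v) w = fa_word (u @ v) w" .
qed

lemma fa_mult_one_left [simp]: "fa_mult fa_one p = p"
proof
  fix w
  have "fa_mult fa_one p w = (\<Sum>s\<in>splits w. if s = ([], w) then p (snd s) else 0)"
    unfolding fa_mult_splits by (rule sum.cong) (auto simp: fa_one_def splits_def prod_eq_iff)
  also have "\<dots> = p w"
    by (subst sum.delta[OF finite_splits]) (auto simp: splits_def)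
  finally show "fa_mult fa_one p w = p w" .
qed

lemma fa_mult_one_right [simp]: "fa_mult p fa_one = p"
proof
  fix w
  have "fa_mult p fa_one w = (\<Sum>s\<in>splits w. if s = (w, []) then p (fst s) else 0)"
    unfolding fa_mult_splits by (rule sum.cong) (auto simp: fa_one_def splits_def prod_eq_iff)
  also have "\<dots> = p w"
    by (subst sum.delta[OF finite_splits]) (auto simp: splits_def)
  finally show "fa_mult p fa_one w = p w" .
qed

lemma fa_star_word: "fa_star (fa_word u) = fa_word (word_star u)"
  by (rule ext) (auto simp: fa_star_apply fa_word_def word_star_eq_iff)

lemma fa_star_one [simp]: "fa_star fa_one = fa_one"
  by (simp add: fa_one_eq_word fa_star_word)

lemma fa_mult_add_left: "fa_mult (p + q) r = fa_mult p r + fa_mult q r"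
  by (auto simp: fa_mult_def sum.distrib algebra_simps)

lemma fa_mult_add_right: "fa_mult r (p + q) = fa_mult r p + fa_mult r q"
  by (auto simp: fa_mult_def sum.distrib algebra_simps)

lemma fa_mult_diff_left: "fa_mult (p - q) r = fa_mult p r - fa_mult q r"
  by (auto simp: fa_mult_def sum_subtractf algebra_simps)

lemma fa_mult_diff_right: "fa_mult r (p - q) = fa_mult r p - fa_mult r q"
  by (auto simp: fa_mult_def sum_subtractf algebra_simps)

lemma fa_mult_smul_left: "fa_mult (fa_smul c p) r = fa_smul c (fa_mult p r)"
  by (auto simp: fa_mult_def fa_smul_def sum_distrib_left algebra_simps)

lemma fa_mult_smul_right: "fa_mult r (fa_smul c p) = fa_smul c (fa_mult r p)"
  by (auto simp: fa_mult_def fa_smul_def sum_distrib_left algebra_simps)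

lemma fa_mult_sum_left: "fa_mult (\<Sum>i\<in>I. f i) r = (\<Sum>i\<in>I. fa_mult (f i) r)"
  by (rule ext) (simp add: fa_mult_def sum_fun_apply sum_distrib_right sum.swap[of _ I])

lemma fa_mult_sum_right: "fa_mult r (\<Sum>i\<in>I. f i) = (\<Sum>i\<in>I. fa_mult r (f i))"
  by (rule ext) (simp add: fa_mult_def sum_fun_apply sum_distrib_left sum.swap[of _ I])

lemma fa_star_add: "fa_star (p + q) = fa_star p + fa_star q"
  by (auto simp: fa_star_def)

lemma fa_star_diff: "fa_star (p - q) = fa_star p - fa_star q"
  by (auto simp: fa_star_def)

lemma fa_star_smul: "fa_star (fa_smul c p) = fa_smul (cnj c) (fa_star p)"
  by (auto simp: fa_star_def fa_smul_def)

lemma fa_star_sum: "fa_star (\<Sum>i\<in>I. f i) = (\<Sum>i\<in>I. fa_star (f i))"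
  by (rule ext) (simp add: fa_star_def sum_fun_apply)

lemma fa_smul_diff: "fa_smul c (p - q) = fa_smul c p - fa_smul c q"
  by (auto simp: fa_smul_def algebra_simps)

lemma fa_smul_diff_left: "fa_smul (a - b) p = fa_smul a p - fa_smul b p"
  by (auto simp: fa_smul_def algebra_simps)

lemma fa_smul_add_left: "fa_smul (a + b) p = fa_smul a p + fa_smul b p"
  by (auto simp: fa_smul_def algebra_simps)

lemma fa_smul_sum: "fa_smul c (\<Sum>i\<in>I. f i) = (\<Sum>i\<in>I. fa_smul c (f i))"
  by (rule ext) (simp add: fa_smul_def sum_fun_apply sum_distrib_left)

lemma fa_smul_smul: "fa_smul c (fa_smul d p) = fa_smul (c * d) p"
  by (auto simp: fa_smul_def)

lemma fa_smul_one [simp]: "fa_smul 1 p = p"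
  by (auto simp: fa_smul_def)

lemma fa_smul_minus_one: "fa_smul (-1) p = - p"
  by (auto simp: fa_smul_def)

lemma fa_smul_zero [simp]: "fa_smul c 0 = 0" "fa_smul 0 p = 0"
  by (auto simp: fa_smul_def)

lemma free_star_alg_iff: "p \<in> free_star_alg G \<longleftrightarrow> finite (supp p) \<and> supp p \<subseteq> words G"
  by (auto simp: free_star_alg_def supp_def words_def)

lemma words_append [simp]: "u @ v \<in> words G \<longleftrightarrow> u \<in> words G \<and> v \<in> words G"
  by (auto simp: words_def)

lemma words_Cons [simp]: "l # w \<in> words G \<longleftrightarrow> fst l \<in> G \<and> w \<in> words G"
  by (auto simp: words_def)

lemma words_word_star [simp]: "word_star w \<in> words G \<longleftrightarrow> w \<in> words G"
  by (auto simp: words_def word_star_def)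

lemma words_Nil [simp]: "[] \<in> words G"
  by (auto simp: words_def)

lemma supp_add: "supp (p + q) \<subseteq> supp p \<union> supp q"
  by (auto simp: supp_def)

lemma supp_diff: "supp (p - q) \<subseteq> supp p \<union> supp q"
  by (auto simp: supp_def)

lemma supp_smul: "supp (fa_smul c p) \<subseteq> supp p"
  by (auto simp: supp_def fa_smul_def)

lemma supp_word [simp]: "supp (fa_word w) = {w}"
  by (auto simp: supp_def fa_word_def)

lemma supp_star: "supp (fa_star p) = word_star ` supp p"
  by (auto simp: supp_def fa_star_apply image_iff) (metis word_star_word_star)

lemma supp_mult: "supp (fa_mult p q) \<subseteq> (\<lambda>s. fst s @ snd s) ` (supp p \<times> supp q)"
proof
  fix w
  assume "w \<in> supp (fa_mult p q)"
  then have "(\<Sum>s\<in>splits w. p (fst s) * q (snd s)) \<noteq> 0"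
    by (simp add: supp_def fa_mult_splits)
  then obtain s where "s \<in> splits w" "p (fst s) * q (snd s) \<noteq> 0"
    by (meson sum.not_neutral_contains_not_neutral)
  then show "w \<in> (\<lambda>s. fst s @ snd s) ` (supp p \<times> supp q)"
    by (auto simp: supp_def splits_def intro!: image_eqI[where x=s])
qed

lemma supp_sum: "supp (\<Sum>i\<in>I. f i) \<subseteq> (\<Union>i\<in>I. supp (f i))"
proof
  fix w
  assume "w \<in> supp (\<Sum>i\<in>I. f i)"
  then have "(\<Sum>i\<in>I. f i w) \<noteq> 0"
    by (simp add: supp_def sum_fun_apply)
  then obtain i where "i \<in> I" "f i w \<noteq> 0"
    by (meson sum.not_neutral_contains_not_neutral)
  then show "w \<in> (\<Union>i\<in>I. supp (f i))"
    by (auto simp: supp_def)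
qed

lemma finite_supp_add [simp]: "finite (supp p) \<Longrightarrow> finite (supp q) \<Longrightarrow> finite (supp (p + q))"
  by (rule finite_subset[OF supp_add]) auto

lemma finite_supp_diff [simp]: "finite (supp p) \<Longrightarrow> finite (supp q) \<Longrightarrow> finite (supp (p - q))"
  by (rule finite_subset[OF supp_diff]) auto

lemma finite_supp_smul [simp]: "finite (supp p) \<Longrightarrow> finite (supp (fa_smul c p))"
  by (rule finite_subset[OF supp_smul])

lemma finite_supp_mult [simp]:
  "finite (supp p) \<Longrightarrow> finite (supp q) \<Longrightarrow> finite (supp (fa_mult p q))"
  by (rule finite_subset[OF supp_mult]) auto

lemma finite_supp_star [simp]: "finite (supp p) \<Longrightarrow> finite (supp (fa_star p))"
  by (simp add: supp_star)

lemma finite_supp_sum: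
  "finite I \<Longrightarrow> (\<And>i. i \<in> I \<Longrightarrow> finite (supp (f i))) \<Longrightarrow> finite (supp (\<Sum>i\<in>I. f i))"
  by (rule finite_subset[OF supp_sum]) auto

lemma finite_supp_gen [simp]: "finite (supp (fa_gen g))"
  by (simp add: fa_gen_eq_word)

lemma finite_supp_one [simp]: "finite (supp fa_one)"
  by (simp add: fa_one_eq_word)

lemma free_star_alg_supp_subset:
  "supp p \<subseteq> S \<Longrightarrow> finite S \<Longrightarrow> S \<subseteq> words G \<Longrightarrow> p \<in> free_star_alg G"
  unfolding free_star_alg_iff by (auto intro: finite_subset)

lemma free_star_alg_add: "p \<in> free_star_alg G \<Longrightarrow> q \<in> free_star_alg G \<Longrightarrow> p + q \<in> free_star_alg G"
  by (rule free_star_alg_supp_subset[OF supp_add]) (auto simp: free_star_alg_iff)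

lemma free_star_alg_diff: "p \<in> free_star_alg G \<Longrightarrow> q \<in> free_star_alg G \<Longrightarrow> p - q \<in> free_star_alg G"
  by (rule free_star_alg_supp_subset[OF supp_diff]) (auto simp: free_star_alg_iff)

lemma free_star_alg_smul: "p \<in> free_star_alg G \<Longrightarrow> fa_smul c p \<in> free_star_alg G"
  by (rule free_star_alg_supp_subset[OF supp_smul]) (auto simp: free_star_alg_iff)

lemma free_star_alg_mult:
  "p \<in> free_star_alg G \<Longrightarrow> q \<in> free_star_alg G \<Longrightarrow> fa_mult p q \<in> free_star_alg G"
  by (rule free_star_alg_supp_subset[OF supp_mult]) (auto simp: free_star_alg_iff)

lemma free_star_alg_star: "p \<in> free_star_alg G \<Longrightarrow> fa_star p \<in> free_star_alg G"
  by (auto simp: free_star_alg_iff supp_star)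

lemma free_star_alg_zero: "0 \<in> free_star_alg G"
  by (auto simp: free_star_alg_iff supp_def)

lemma free_star_alg_sum:
  "finite I \<Longrightarrow> (\<And>i. i \<in> I \<Longrightarrow> f i \<in> free_star_alg G) \<Longrightarrow> (\<Sum>i\<in>I. f i) \<in> free_star_alg G"
  by (induct I rule: finite_induct) (auto intro: free_star_alg_add free_star_alg_zero)

lemma free_star_alg_word: "w \<in> words G \<Longrightarrow> fa_word w \<in> free_star_alg G"
  by (auto simp: free_star_alg_iff)

lemma free_star_alg_one: "fa_one \<in> free_star_alg G"
  by (auto simp: free_star_alg_iff fa_one_eq_word)

lemma free_star_alg_gen: "g \<in> G \<Longrightarrow> fa_gen g \<in> free_star_alg G"
  by (auto simp: free_star_alg_iff fa_gen_eq_word)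

lemma free_star_alg_mono: "G \<subseteq> G' \<Longrightarrow> p \<in> free_star_alg G \<Longrightarrow> p \<in> free_star_alg G'"
  by (auto simp: free_star_alg_iff words_def)

lemma free_star_alg_UNIV: "p \<in> free_star_alg UNIV \<longleftrightarrow> finite (supp p)"
  by (auto simp: free_star_alg_iff words_def)

lemma fa_decompose: "finite (supp p) \<Longrightarrow> p = (\<Sum>w\<in>supp p. fa_smul (p w) (fa_word w))"
proof (rule ext)
  fix v
  assume "finite (supp p)"
  have "(\<Sum>w\<in>supp p. fa_smul (p w) (fa_word w)) v = (\<Sum>w\<in>supp p. if v = w then p w else 0)"
    by (simp add: sum_fun_apply fa_smul_def fa_word_def) (rule sum.cong, auto)
  also have "\<dots> = p v"
    using \<open>finite (supp p)\<close> by (auto simp: supp_def)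
  finally show "p v = (\<Sum>w\<in>supp p. fa_smul (p w) (fa_word w)) v"
    by simp
qed

section \<open>Extending a map on generators to a *-homomorphism\<close>

fun letter_image :: "('g \<Rightarrow> 'k fsa) \<Rightarrow> 'g \<times> bool \<Rightarrow> 'k fsa" where
  "letter_image \<phi> (g, b) = (if b then fa_star (\<phi> g) else \<phi> g)"

primrec word_image :: "('g \<Rightarrow> 'k fsa) \<Rightarrow> ('g \<times> bool) list \<Rightarrow> 'k fsa" where
  "word_image \<phi> [] = fa_one"
| "word_image \<phi> (l # w) = fa_mult (letter_image \<phi> l) (word_image \<phi> w)"

definition fa_lift :: "('g \<Rightarrow> 'k fsa) \<Rightarrow> 'g fsa \<Rightarrow> 'k fsa" where
  "fa_lift \<phi> p = (\<Sum>w\<in>supp p. fa_smul (p w) (word_image \<phi> w))"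

lemma word_image_append: "word_image \<phi> (u @ v) = fa_mult (word_image \<phi> u) (word_image \<phi> v)"
  by (induct u) (simp_all add: fa_mult_assoc)

lemma word_image_word_star: "word_image \<phi> (word_star w) = fa_star (word_image \<phi> w)"
proof (induct w)
  case (Cons l w)
  obtain g b where l: "l = (g, b)"
    by (cases l)
  have "word_star (l # w) = word_star w @ [(g, \<not> b)]"
    by (simp add: word_star_def l)
  then show ?case
    by (simp add: word_image_append Cons fa_star_mult l)
qed simp

lemma word_image_in_free_star_alg:
  assumes "w \<in> words G" and "\<And>g. g \<in> G \<Longrightarrow> \<phi> g \<in> free_star_alg G'"
  shows "word_image \<phi> w \<in> free_star_alg G'"
  using assms
proof (induct w)
  case (Cons l w)
  then show ?case
    by (cases l) (auto intro!: free_star_alg_mult free_star_alg_star)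
qed (simp add: free_star_alg_one)

lemma fa_lift_in_free_star_alg:
  assumes "p \<in> free_star_alg G" and "\<And>g. g \<in> G \<Longrightarrow> \<phi> g \<in> free_star_alg G'"
  shows "fa_lift \<phi> p \<in> free_star_alg G'"
  using assms unfolding fa_lift_def free_star_alg_iff[of p]
  by (intro free_star_alg_sum free_star_alg_smul word_image_in_free_star_alg) auto

lemma fa_lift_eq_sum:
  "finite S \<Longrightarrow> supp p \<subseteq> S \<Longrightarrow> fa_lift \<phi> p = (\<Sum>w\<in>S. fa_smul (p w) (word_image \<phi> w))"
  unfolding fa_lift_def by (rule sum.mono_neutral_left) (auto simp: supp_def)

lemma fa_lift_add:
  "finite (supp p) \<Longrightarrow> finite (supp q) \<Longrightarrow> fa_lift \<phi> (p + q) = fa_lift \<phi> p + fa_lift \<phi> q"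
  using supp_add[of p q]
  by (simp add: fa_lift_eq_sum[of "supp p \<union> supp q"] fa_smul_add_left sum.distrib)

lemma fa_lift_diff:
  "finite (supp p) \<Longrightarrow> finite (supp q) \<Longrightarrow> fa_lift \<phi> (p - q) = fa_lift \<phi> p - fa_lift \<phi> q"
  using supp_diff[of p q]
  by (simp add: fa_lift_eq_sum[of "supp p \<union> supp q"] fa_smul_diff_left sum_subtractf)

lemma fa_lift_smul: "finite (supp p) \<Longrightarrow> fa_lift \<phi> (fa_smul c p) = fa_smul c (fa_lift \<phi> p)"
  using supp_smul[of c p]
  by (simp add: fa_lift_eq_sum[of "supp p"] fa_smul_sum fa_smul_smul) (simp add: fa_smul_def)

lemma fa_lift_zero [simp]: "fa_lift \<phi> 0 = 0"
  by (simp add: fa_lift_def supp_def)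

lemma fa_lift_word [simp]: "fa_lift \<phi> (fa_word w) = word_image \<phi> w"
  by (simp add: fa_lift_def) (simp add: fa_word_def)

lemma fa_lift_gen: "fa_lift \<phi> (fa_gen g) = \<phi> g"
  by (simp add: fa_gen_eq_word)

lemma fa_lift_one [simp]: "fa_lift \<phi> fa_one = fa_one"
  by (simp add: fa_one_eq_word)

lemma fa_lift_sum:
  "finite I \<Longrightarrow> (\<And>i. i \<in> I \<Longrightarrow> finite (supp (f i))) \<Longrightarrow>
   fa_lift \<phi> (\<Sum>i\<in>I. f i) = (\<Sum>i\<in>I. fa_lift \<phi> (f i))"
  by (induct I rule: finite_induct) (simp_all add: fa_lift_add finite_supp_sum)

lemma fa_mult_sum_smul:
  "fa_mult (\<Sum>u\<in>A. fa_smul (a u) (X u)) (\<Sum>v\<in>B. fa_smul (b v) (Y v)) =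
   (\<Sum>u\<in>A. \<Sum>v\<in>B. fa_smul (a u * b v) (fa_mult (X u) (Y v)))"
  by (simp add: fa_mult_sum_left fa_mult_sum_right fa_mult_smul_left fa_mult_smul_right
      fa_smul_smul fa_smul_sum mult.commute sum.swap[of _ B])

lemma fa_lift_mult:
  assumes "finite (supp p)" and "finite (supp q)"
  shows "fa_lift \<phi> (fa_mult p q) = fa_mult (fa_lift \<phi> p) (fa_lift \<phi> q)"
proof -
  have "fa_mult p q =
        fa_mult (\<Sum>u\<in>supp p. fa_smul (p u) (fa_word u)) (\<Sum>v\<in>supp q. fa_smul (q v) (fa_word v))"
    using fa_decompose assms by metis
  also have "\<dots> = (\<Sum>u\<in>supp p. \<Sum>v\<in>supp q. fa_smul (p u * q v) (fa_word (u @ v)))"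
    by (simp add: fa_mult_sum_smul fa_mult_word)
  finally have "fa_lift \<phi> (fa_mult p q) =
      (\<Sum>u\<in>supp p. \<Sum>v\<in>supp q. fa_smul (p u * q v) (word_image \<phi> (u @ v)))"
    using assms by (simp add: fa_lift_sum finite_supp_sum fa_lift_smul)
  also have "\<dots> = fa_mult (fa_lift \<phi> p) (fa_lift \<phi> q)"
    unfolding fa_lift_def by (simp add: fa_mult_sum_smul word_image_append)
  finally show ?thesis .
qed

lemma fa_lift_star: "finite (supp p) \<Longrightarrow> fa_lift \<phi> (fa_star p) = fa_star (fa_lift \<phi> p)"
proof -
  assume fin: "finite (supp p)"
  have "fa_star p = (\<Sum>w\<in>supp p. fa_smul (cnj (p w)) (fa_word (word_star w)))"
    by (subst fa_decompose[OF fin]) (simp add: fa_star_sum fa_star_smul fa_star_word)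
  then have "fa_lift \<phi> (fa_star p) =
      (\<Sum>w\<in>supp p. fa_smul (cnj (p w)) (word_image \<phi> (word_star w)))"
    using fin by (simp add: fa_lift_sum fa_lift_smul)
  then show ?thesis
    by (simp add: fa_lift_def fa_star_sum fa_star_smul word_image_word_star)
qed

lemmas fa_lift_simps = fa_lift_add fa_lift_diff fa_lift_smul fa_lift_mult fa_lift_star fa_lift_one

lemma star_ideal_zero: "0 \<in> star_ideal G R"
  using star_ideal.zero by (simp add: fa_zero_eq_zero)

lemma star_ideal_add: "x \<in> star_ideal G R \<Longrightarrow> y \<in> star_ideal G R \<Longrightarrow> x + y \<in> star_ideal G R"
  using star_ideal.add by (simp add: fa_add_eq_plus)

lemma star_ideal_diff: "x \<in> star_ideal G R \<Longrightarrow> y \<in> star_ideal G R \<Longrightarrow> x - y \<in> star_ideal G R"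
  using star_ideal_add[OF _ star_ideal.smul[of y G R "-1"]] by (simp add: fa_smul_minus_one)

lemma star_ideal_uminus: "x \<in> star_ideal G R \<Longrightarrow> - x \<in> star_ideal G R"
  using star_ideal_diff[OF star_ideal_zero] by fastforce

lemma star_ideal_sum:
  "(\<And>i. i \<in> I \<Longrightarrow> f i \<in> star_ideal G R) \<Longrightarrow> (\<Sum>i\<in>I. f i) \<in> star_ideal G R"
  by (induct I rule: infinite_finite_induct) (auto intro: star_ideal_add star_ideal_zero)

lemma star_ideal_mult_cong:
  assumes "x - x' \<in> star_ideal G R" and "y - y' \<in> star_ideal G R"
    and "x' \<in> free_star_alg G" and "y \<in> free_star_alg G"
  shows "fa_mult x y - fa_mult x' y' \<in> star_ideal G R"
proof -
  have "fa_mult x y - fa_mult x' y' = fa_mult (x - x') y + fa_mult x' (y - y')"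
    by (simp add: fa_mult_diff_left fa_mult_diff_right)
  then show ?thesis
    using assms by (simp add: star_ideal_add star_ideal.multl star_ideal.multr)
qed

lemma star_ideal_subset_free_star_alg:
  assumes "R \<subseteq> free_star_alg G"
  shows "star_ideal G R \<subseteq> free_star_alg G"
proof
  fix x
  assume "x \<in> star_ideal G R"
  then show "x \<in> free_star_alg G"
  proof (induct rule: star_ideal.induct)
    case zero
    show ?case
      by (simp only: fa_zero_eq_zero free_star_alg_zero)
  next
    case (add x y)
    then show ?case
      by (simp only: fa_add_eq_plus free_star_alg_add)
  qed (use assms in \<open>auto intro: free_star_alg_smul free_star_alg_star free_star_alg_mult\<close>)
qed

lemma star_ideal_subset:
  assumes "G' \<subseteq> G" and "R' \<subseteq> star_ideal G R"
  shows "star_ideal G' R' \<subseteq> star_ideal G R"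
proof
  fix x
  assume "x \<in> star_ideal G' R'"
  then show "x \<in> star_ideal G R"
    by (induct rule: star_ideal.induct) (use assms in \<open>auto intro: star_ideal.intros free_star_alg_mono\<close>)
qed

lemma fa_lift_star_ideal:
  assumes R: "R \<subseteq> free_star_alg G"
    and \<phi>: "\<And>g. g \<in> G \<Longrightarrow> \<phi> g \<in> free_star_alg G'"
    and relations: "\<And>r. r \<in> R \<Longrightarrow> fa_lift \<phi> r \<in> star_ideal G' R'"
    and "x \<in> star_ideal G R"
  shows "fa_lift \<phi> x \<in> star_ideal G' R'"
proof -
  have fin: "finite (supp y)" if "y \<in> star_ideal G R" for y
    using that star_ideal_subset_free_star_alg[OF R] by (auto simp: free_star_alg_iff)
  have fin': "finite (supp a)" if "a \<in> free_star_alg G" for a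
    using that by (simp add: free_star_alg_iff)
  from \<open>x \<in> star_ideal G R\<close> show ?thesis
  proof (induct rule: star_ideal.induct)
    case (gen r)
    then show ?case
      by (rule relations)
  next
    case zero
    show ?case
      by (simp only: fa_zero_eq_zero fa_lift_zero star_ideal_zero)
  next
    case (add x y)
    then show ?case
      by (simp only: fa_add_eq_plus fa_lift_add fin star_ideal_add)
  next
    case (smul x c)
    then show ?case
      by (simp only: fa_lift_smul fin star_ideal.smul)
  next
    case (star x)
    then show ?case
      by (simp only: fa_lift_star fin star_ideal.star)
  next
    case (multl x a)
    then show ?case
      by (simp only: fa_lift_mult fin fin' star_ideal.multl fa_lift_in_free_star_alg \<phi>)
  next
    case (multr x a)
    then show ?case
      by (simp only: fa_lift_mult fin fin' star_ideal.multr fa_lift_in_free_star_alg \<phi>)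
  qed
qed

lemma word_image_congruent:
  assumes \<phi>: "\<And>g. g \<in> G \<Longrightarrow> \<phi> g \<in> free_star_alg G"
    and cong: "\<And>g. g \<in> G \<Longrightarrow> \<phi> g - fa_gen g \<in> star_ideal G R"
    and "w \<in> words G"
  shows "word_image \<phi> w - fa_word w \<in> star_ideal G R"
proof -
  have letter: "letter_image \<phi> (g, b) - fa_word [(g, b)] \<in> star_ideal G R" if "g \<in> G" for g b
  proof (cases b)
    case True
    have "fa_word [(g, True)] = fa_star (fa_gen g)"
      by (simp add: fa_gen_eq_word fa_star_word word_star_def)
    then show ?thesis
      using star_ideal.star[OF cong[OF that]] by (simp add: True fa_star_diff)
  next
    case False
    then show ?thesis
      using cong[OF that] by (simp add: fa_gen_eq_word)
  qed
  from \<open>w \<in> words G\<close> show ?thesis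
  proof (induct w)
    case Nil
    show ?case
      by (simp only: word_image.simps fa_one_eq_word diff_self star_ideal_zero)
  next
    case (Cons l w)
    have "word_image \<phi> (l # w) - fa_word (l # w) =
        fa_mult (letter_image \<phi> l) (word_image \<phi> w) - fa_mult (fa_word [l]) (fa_word w)"
      by (simp add: fa_mult_word)
    also have "\<dots> \<in> star_ideal G R"
    proof (rule star_ideal_mult_cong)
      show "letter_image \<phi> l - fa_word [l] \<in> star_ideal G R"
        using Cons.prems letter by (cases l) simp
      show "word_image \<phi> w - fa_word w \<in> star_ideal G R"
        using Cons.prems by (intro Cons.hyps) simp
      show "fa_word [l] \<in> free_star_alg G" "word_image \<phi> w \<in> free_star_alg G"
        using Cons.prems \<phi> by (auto intro: free_star_alg_word word_image_in_free_star_alg)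
    qed
    finally show ?case .
  qed
qed

lemma fa_lift_congruent:
  assumes \<phi>: "\<And>g. g \<in> G \<Longrightarrow> \<phi> g \<in> free_star_alg G"
    and cong: "\<And>g. g \<in> G \<Longrightarrow> \<phi> g - fa_gen g \<in> star_ideal G R"
    and x: "x \<in> free_star_alg G"
  shows "fa_lift \<phi> x - x \<in> star_ideal G R"
proof -
  have x_supp: "finite (supp x)" "supp x \<subseteq> words G"
    using x by (auto simp: free_star_alg_iff)
  have "fa_lift \<phi> x - x =
      (\<Sum>w\<in>supp x. fa_smul (x w) (word_image \<phi> w)) - (\<Sum>w\<in>supp x. fa_smul (x w) (fa_word w))"
    unfolding fa_lift_def using fa_decompose[OF x_supp(1)] by simp
  also have "\<dots> = (\<Sum>w\<in>supp x. fa_smul (x w) (word_image \<phi> w - fa_word w))"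
    by (simp add: fa_smul_diff sum_subtractf)
  also have "\<dots> \<in> star_ideal G R"
    using x_supp word_image_congruent[OF \<phi> cong] by (intro star_ideal_sum star_ideal.smul) auto
  finally show ?thesis .
qed

text \<open>The inverse of the induced map is induced by the inclusion of free_star_alg G' into
  free_star_alg G.\<close>

lemma quot_star_isomorphic_by_lift:
  assumes G: "G' \<subseteq> G" and R: "R \<subseteq> free_star_alg G"
    and \<phi>: "\<And>g. g \<in> G \<Longrightarrow> \<phi> g \<in> free_star_alg G'"
    and relations: "\<And>r. r \<in> R \<Longrightarrow> fa_lift \<phi> r \<in> star_ideal G' R'"
    and relations': "R' \<subseteq> star_ideal G R"
    and cong: "\<And>g. g \<in> G \<Longrightarrow> \<phi> g - fa_gen g \<in> star_ideal G R"
    and cong': "\<And>g. g \<in> G' \<Longrightarrow> \<phi> g - fa_gen g \<in> star_ideal G' R'"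
  shows "quot_star_isomorphic G (star_ideal G R) G' (star_ideal G' R')"
proof -
  let ?F = "fa_lift \<phi>" and ?I = "star_ideal G R" and ?I' = "star_ideal G' R'"
  have fin: "finite (supp x)" if "x \<in> free_star_alg G" for x
    using that by (simp add: free_star_alg_iff)
  have zero: "fa_diff u u \<in> ?I'" for u
    by (simp add: fa_diff_eq_minus star_ideal_zero)
  have \<phi>G: "\<phi> g \<in> free_star_alg G" if "g \<in> G" for g
    using free_star_alg_mono[OF G \<phi>[OF that]] .
  have injective: "?F x \<in> ?I' \<longleftrightarrow> x \<in> ?I" if x: "x \<in> free_star_alg G" for x
  proof
    assume "?F x \<in> ?I'"
    then have "?F x \<in> ?I"
      using star_ideal_subset[OF G relations'] by blast
    then have "?F x - (?F x - x) \<in> ?I"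
      using fa_lift_congruent[OF \<phi>G cong x] by (rule star_ideal_diff)
    then show "x \<in> ?I"
      by simp
  qed (rule fa_lift_star_ideal[OF R \<phi> relations])
  have surjective: "\<exists>x\<in>free_star_alg G. fa_diff (?F x) y \<in> ?I'" if y: "y \<in> free_star_alg G'" for y
    using fa_lift_congruent[OF \<phi> cong' y] free_star_alg_mono[OF G y] G
    by (auto simp: fa_diff_eq_minus)
  show ?thesis
    unfolding quot_star_isomorphic_def
    using \<phi> injective surjective
    by (intro exI[of _ ?F])
      (simp add: fin fa_add_eq_plus fa_lift_simps zero fa_lift_in_free_star_alg)
qed

section \<open>Graded Hilbert spaces and the grading operator\<close>

locale graded_hilbert_space =
  fixes smul :: "complex \<Rightarrow> 'h::ab_group_add \<Rightarrow> 'h"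
    and ip :: "'h \<Rightarrow> 'h \<Rightarrow> complex"
    and H0 H1 :: "'h set"
  assumes graded: "graded_hilbert smul ip H0 H1"
begin

abbreviation \<gamma> :: "'h \<Rightarrow> 'h" where
  "\<gamma> \<equiv> gam H0 H1"

lemma inner_product: "inner_product_space smul ip"
  using graded unfolding graded_hilbert_def by blast

lemma vector_space: "vector_space smul"
  using inner_product unfolding inner_product_space_def by blast

sublocale V: vector_space smul
  by (rule vector_space)

lemma ip_add: "ip x (y + z) = ip x y + ip x z"
  using inner_product unfolding inner_product_space_def by blast

lemma ip_smul: "ip x (smul c y) = c * ip x y"
  using inner_product unfolding inner_product_space_def by blast

lemma ip_cnj: "ip y x = cnj (ip x y)"
  using inner_product unfolding inner_product_space_def by blast

lemma ip_self_eq_zero: "ip x x = 0 \<Longrightarrow> x = 0"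
  using inner_product unfolding inner_product_space_def by blast

lemma ip_zero [simp]: "ip x 0 = 0"
  using ip_add[of x 0 0] by simp

lemma ip_minus: "ip x (- y) = - ip x y"
  using ip_add[of x y "- y"] by (simp add: eq_neg_iff_add_eq_0 add.commute)

lemma ip_diff: "ip x (y - z) = ip x y - ip x z"
  using ip_add[of x y "- z"] ip_minus[of x z] by simp

lemma ip_add_left: "ip (x + y) z = ip x z + ip y z"
  by (metis ip_add ip_cnj complex_cnj_add)

lemma ip_diff_left: "ip (x - y) z = ip x z - ip y z"
  by (metis ip_diff ip_cnj complex_cnj_diff)

lemma ip_minus_left: "ip (- x) y = - ip x y"
  by (metis ip_minus ip_cnj complex_cnj_minus)

lemma subspace_H0: "V.subspace H0"
  using graded unfolding graded_hilbert_def infinite_dim_subspace_def by blast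

lemma subspace_H1: "V.subspace H1"
  using graded unfolding graded_hilbert_def infinite_dim_subspace_def by blast

lemma H0_H1_orthogonal: "x \<in> H0 \<Longrightarrow> y \<in> H1 \<Longrightarrow> ip x y = 0"
  using graded unfolding graded_hilbert_def by blast

lemma H0_H1_decomposition: "\<exists>a\<in>H0. \<exists>b\<in>H1. x = a + b"
  using graded unfolding graded_hilbert_def by blast

lemma H0_inter_H1: "x \<in> H0 \<Longrightarrow> x \<in> H1 \<Longrightarrow> x = 0"
  using H0_H1_orthogonal ip_self_eq_zero by blast

lemma proj0_eqI:
  assumes "a \<in> H0" and "x - a \<in> H1"
  shows "proj0 H0 H1 x = a"
  unfolding proj0_def
proof (rule the_equality)
  fix a'
  assume a': "a' \<in> H0 \<and> x - a' \<in> H1"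
  have "a' - a \<in> H0"
    using assms a' V.subspace_diff[OF subspace_H0] by blast
  moreover have "a' - a \<in> H1"
    using V.subspace_diff[OF subspace_H1 assms(2), of "x - a'"] a' by (simp add: algebra_simps)
  ultimately show "a' = a"
    using H0_inter_H1 by fastforce
qed (use assms in auto)

lemma proj0_mem: "proj0 H0 H1 x \<in> H0" "x - proj0 H0 H1 x \<in> H1"
proof -
  obtain a b where "a \<in> H0" "b \<in> H1" "x = a + b"
    using H0_H1_decomposition by blast
  then have "proj0 H0 H1 x = a"
    by (intro proj0_eqI) auto
  then show "proj0 H0 H1 x \<in> H0" "x - proj0 H0 H1 x \<in> H1"
    using \<open>a \<in> H0\<close> \<open>b \<in> H1\<close> \<open>x = a + b\<close> by simp_all
qed

lemma gam_H0: "x \<in> H0 \<Longrightarrow> \<gamma> x = x"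
  using proj0_eqI[of x x] V.subspace_0[OF subspace_H1] by (simp add: gam_def)

lemma gam_H1: "x \<in> H1 \<Longrightarrow> \<gamma> x = - x"
  using proj0_eqI[of 0 x] V.subspace_0[OF subspace_H0] by (simp add: gam_def)

lemma gam_add: "\<gamma> (x + y) = \<gamma> x + \<gamma> y"
proof -
  have "proj0 H0 H1 (x + y) = proj0 H0 H1 x + proj0 H0 H1 y"
  proof (rule proj0_eqI)
    show "proj0 H0 H1 x + proj0 H0 H1 y \<in> H0"
      using proj0_mem by (intro V.subspace_add[OF subspace_H0])
    have eq: "x + y - (proj0 H0 H1 x + proj0 H0 H1 y) = (x - proj0 H0 H1 x) + (y - proj0 H0 H1 y)"
      by (simp add: algebra_simps)
    show "x + y - (proj0 H0 H1 x + proj0 H0 H1 y) \<in> H1"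
      unfolding eq using proj0_mem by (intro V.subspace_add[OF subspace_H1])
  qed
  then show ?thesis
    by (simp add: gam_def algebra_simps)
qed

sublocale gam: additive \<gamma>
  by standard (rule gam_add)

lemma gam_smul: "\<gamma> (smul c x) = smul c (\<gamma> x)"
proof -
  have "proj0 H0 H1 (smul c x) = smul c (proj0 H0 H1 x)"
    using proj0_mem[of x] V.subspace_scale[OF subspace_H0] V.subspace_scale[OF subspace_H1]
    by (intro proj0_eqI) (auto simp flip: V.scale_right_diff_distrib)
  then show ?thesis
    by (simp add: gam_def V.scale_right_diff_distrib)
qed

lemma gam_gam [simp]: "\<gamma> (\<gamma> x) = x"
proof -
  have "proj0 H0 H1 (\<gamma> x) = proj0 H0 H1 x"
    using proj0_mem[of x] by (intro proj0_eqI) (auto simp: gam_def dest: V.subspace_neg[OF subspace_H1])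
  then show ?thesis
    by (simp add: gam_def)
qed

lemma double_eq_zero: "(x::'h) + x = 0 \<Longrightarrow> x = 0"
  using V.scale_left_distrib[of 1 1 x] V.scale_scale[of "1/2" 2 x] by simp

lemma H0_iff_gam: "x \<in> H0 \<longleftrightarrow> \<gamma> x = x"
proof
  assume "\<gamma> x = x"
  then have "(x - proj0 H0 H1 x) + (x - proj0 H0 H1 x) = 0"
    by (simp add: gam_def algebra_simps)
  then have "x - proj0 H0 H1 x = 0"
    by (rule double_eq_zero)
  then show "x \<in> H0"
    using proj0_mem(1)[of x] by simp
qed (rule gam_H0)

lemma H1_iff_gam: "x \<in> H1 \<longleftrightarrow> \<gamma> x = - x"
proof
  assume "\<gamma> x = - x"
  then have "proj0 H0 H1 x + proj0 H0 H1 x = 0"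
    by (simp add: gam_def algebra_simps)
  then have "proj0 H0 H1 x = 0"
    by (rule double_eq_zero)
  then show "x \<in> H1"
    using proj0_mem(2)[of x] by simp
qed (rule gam_H1)

lemma homog_iff_gam: "homog H0 H1 a f \<longleftrightarrow> \<gamma> f = (if a then - f else f)"
  by (simp add: homog_def H0_iff_gam H1_iff_gam)

lemma homog_gam: "homog H0 H1 a f \<Longrightarrow> homog H0 H1 a (\<gamma> f)"
  by (simp add: homog_iff_gam gam.minus)

lemma homog_minus: "homog H0 H1 a f \<Longrightarrow> homog H0 H1 a (- f)"
  by (simp add: homog_iff_gam gam.minus)

lemma homog_diff: "homog H0 H1 a f \<Longrightarrow> homog H0 H1 a f' \<Longrightarrow> homog H0 H1 a (f - f')"
  by (simp add: homog_iff_gam gam.diff)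

lemma cnj_ssign [simp]: "cnj (ssign a b) = ssign a b"
  by (simp add: ssign_def)

lemma ssign_commute: "ssign b a = ssign a b"
  by (auto simp: ssign_def)

lemma homog_orthogonal: "homog H0 H1 a x \<Longrightarrow> homog H0 H1 b y \<Longrightarrow> a \<noteq> b \<Longrightarrow> ip x y = 0"
  by (cases a; cases b) (auto simp: homog_def H0_H1_orthogonal ip_cnj[of x y] dest: H0_H1_orthogonal)

end

locale basis_projection = graded_hilbert_space smul ip H0 H1
  for smul :: "complex \<Rightarrow> 'h::ab_group_add \<Rightarrow> 'h" and ip H0 H1 +
  fixes J P :: "'h \<Rightarrow> 'h"
  assumes conjugation: "even_conjugation smul ip H0 H1 J"
    and projection: "even_orth_projection smul ip H0 H1 P"
    and J_P: "\<forall>x. J (P x) = J x - P (J x)"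
begin

abbreviation q :: "'h \<Rightarrow> 'h" where
  "q \<equiv> qop H0 H1 P"

lemma J_add: "J (x + y) = J x + J y"
  using conjugation unfolding even_conjugation_def by blast

lemma J_smul: "J (smul c x) = smul (cnj c) (J x)"
  using conjugation unfolding even_conjugation_def by blast

lemma J_J [simp]: "J (J x) = x"
  using conjugation unfolding even_conjugation_def by blast

lemma J_gam: "J (\<gamma> x) = \<gamma> (J x)"
  using conjugation unfolding even_conjugation_def by blast

lemma P_add: "P (x + y) = P x + P y"
  using projection unfolding even_orth_projection_def by blast

lemma P_smul: "P (smul c x) = smul c (P x)"
  using projection unfolding even_orth_projection_def by blast

lemma P_P [simp]: "P (P x) = P x"
  using projection unfolding even_orth_projection_def by blast

lemma P_self_adjoint: "ip (P x) y = ip x (P y)"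
  using projection unfolding even_orth_projection_def by blast

lemma P_gam: "P (\<gamma> x) = \<gamma> (P x)"
  using projection unfolding even_orth_projection_def by blast

sublocale J: additive J
  by standard (rule J_add)

sublocale P: additive P
  by standard (rule P_add)

lemma P_J: "P (J x) = J x - J (P x)"
  using J_P by (simp add: algebra_simps)

lemma P_J_P [simp]: "P (J (P x)) = 0"
  using P_J[of "P x"] by simp

lemma range_P_iff: "x \<in> range P \<longleftrightarrow> P x = x"
  by (metis P_P rangeE rangeI)

lemma P_J_range: "P f = f \<Longrightarrow> P (J f) = 0"
  by (metis P_J_P)

lemma homog_P: "homog H0 H1 a f \<Longrightarrow> homog H0 H1 a (P f)"
  by (simp add: homog_iff_gam P_gam[symmetric] P.minus)

lemma homog_J: "homog H0 H1 a f \<Longrightarrow> homog H0 H1 a (J f)"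
  by (simp add: homog_iff_gam J_gam[symmetric] J.minus)

lemma ip_J_J: "ip (J x) (J y) = ip y x"
proof -
  have "hnorm ip (J x) = hnorm ip x" for x
    using conjugation unfolding even_conjugation_def by blast
  then have norm: "Re (ip (J x) (J x)) = Re (ip x x)" for x
    by (simp add: hnorm_def)
  have expand: "Re (ip (a + b) (a + b)) = Re (ip a a) + Re (ip b b) + 2 * Re (ip a b)" for a b
    using ip_cnj[of a b] by (simp add: ip_add ip_add_left)
  have Re: "Re (ip (J x) (J y)) = Re (ip x y)" for x y
    using norm[of "x + y"] by (simp only: J_add expand norm)
  have "Im (ip (J x) (J y)) = - Im (ip x y)"
    using Re[of x "smul \<i> y"] by (simp add: J_smul ip_smul ip_minus)
  then show ?thesis
    using Re[of x y] ip_cnj[of x y] by (simp add: complex_eq_iff)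
qed

lemma P_q: "P (q f) = P f"
  by (simp add: qop_def P.diff P_gam gam.diff)

lemma P_J_q: "P (J (q f)) = - P (\<gamma> (J f))"
  by (simp add: qop_def J.diff P.diff J_gam P_gam P_J)

lemma P_gam_J_q_J: "P (\<gamma> (J (q (J f)))) = - P f"
  using P_J_q[of "J f"] by (simp add: P_gam gam.minus)

lemma q_range: "P f = f \<Longrightarrow> q f = f"
  by (simp add: qop_def gam.zero)

lemma q_J_range: "P f = f \<Longrightarrow> q (J f) = - \<gamma> (J f)"
  by (simp add: qop_def P_J_range gam.zero)

lemma P_gam_J_range: "P f = f \<Longrightarrow> P (\<gamma> (J f)) = 0"
  by (simp add: P_gam P_J_range gam.zero)

lemma ip_q_J_range:
  assumes "P f1 = f1" and "P f2 = f2"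
  shows "ip f1 (q (J f2)) = 0"
proof -
  have "ip f1 (q (J f2)) = ip (P f1) (- \<gamma> (J f2))"
    using assms by (simp add: q_J_range)
  also have "\<dots> = ip f1 (- P (\<gamma> (J f2)))"
    by (simp add: P_self_adjoint P.minus)
  also have "\<dots> = 0"
    using assms(2) by (simp add: P_gam_J_range)
  finally show ?thesis .
qed

lemma q_J_P_gam_J: "q (J (P (\<gamma> (J f)))) = - (f - P f)"
proof -
  have "J (P (\<gamma> (J f))) = \<gamma> f - P (\<gamma> f)"
    by (simp add: J_P J_gam)
  then show ?thesis
    by (simp add: qop_def P.diff gam.diff P_gam[symmetric] gam.minus)
qed

lemma q_J_eq: "q (J f) = P (J f) + q (J (P f))"
  by (simp add: qop_def P.diff J_P)

text \<open>The CSR commutators of the creation and the annihilation parts of the images of B(f1) and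
  B^dagger(f2) add up to (f1, f2).\<close>

lemma ip_P_plus_ip_P_gam_J:
  assumes a: "homog H0 H1 a f1" and b: "homog H0 H1 b f2"
  shows "ip (P f1) (P f2) + ssign a b * ip (P (\<gamma> (J f2))) (P (J f1)) = ip f1 f2"
proof -
  define u1 where "u1 = f1 - P f1"
  define u2 where "u2 = f2 - P f2"
  have hu1: "homog H0 H1 a u1"
    unfolding u1_def by (rule homog_diff[OF a homog_P[OF a]])
  have hu2: "homog H0 H1 b u2"
    unfolding u2_def by (rule homog_diff[OF b homog_P[OF b]])
  have "ip (P (\<gamma> (J f2))) (P (J f1)) = ip (\<gamma> (J u2)) (J u1)"
    by (simp add: u1_def u2_def P_gam P_J J.diff)
  also have "\<dots> = (if b then - ip u1 u2 else ip u1 u2)"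
    using homog_J[OF hu2] by (simp add: homog_iff_gam ip_minus_left ip_J_J)
  finally have J_part: "ip (P (\<gamma> (J f2))) (P (J f1)) = (if b then - ip u1 u2 else ip u1 u2)" .
  have u: "ip u1 u2 = ip f1 f2 - ip (P f1) (P f2)"
    by (simp add: u1_def u2_def ip_diff ip_diff_left P_self_adjoint)
  show ?thesis
  proof (cases "a = b")
    case True
    then show ?thesis
      by (cases b) (simp_all add: J_part ssign_def u)
  next
    case False
    then have "ip u1 u2 = 0" "ip (P f1) (P f2) = 0"
      using homog_orthogonal hu1 hu2 homog_P[OF a] homog_P[OF b] by blast+
    moreover have "ip f1 f2 = 0"
      using homog_orthogonal a b False by blast
    ultimately show ?thesis
      by (simp add: J_part)
  qed
qed

end


section \<open>The isomorphism of the SSR and the CSR algebra\<close>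

context basis_projection
begin

abbreviation cr :: "'h \<Rightarrow> 'h cgen fsa" where
  "cr f \<equiv> fa_gen (Cr f)"

abbreviation an :: "'h \<Rightarrow> 'h cgen fsa" where
  "an f \<equiv> fa_gen (An f)"

abbreviation ssr_ideal :: "'h cgen fsa set" where
  "ssr_ideal \<equiv> star_ideal UNIV (ssr_relations smul ip H0 H1 J P)"

abbreviation csr_ideal :: "'h cgen fsa set" where
  "csr_ideal \<equiv> star_ideal (csr_gens P) (csr_relations smul ip H0 H1 P)"

lemma cr_in_csr_alg: "f \<in> range P \<Longrightarrow> cr f \<in> free_star_alg (csr_gens P)"
  by (rule free_star_alg_gen) (auto simp: csr_gens_def)

lemma an_in_csr_alg: "f \<in> range P \<Longrightarrow> an f \<in> free_star_alg (csr_gens P)"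
  by (rule free_star_alg_gen) (auto simp: csr_gens_def)

lemma csr_cr_linear:
  "f1 \<in> range P \<Longrightarrow> f2 \<in> range P \<Longrightarrow>
   cr (smul c1 f1 + smul c2 f2) - (fa_smul c1 (cr f1) + fa_smul c2 (cr f2)) \<in> csr_ideal"
  unfolding fa_diff_eq_minus[symmetric] fa_add_eq_plus[symmetric]
  by (rule star_ideal.gen) (unfold csr_relations_def, blast)

lemma csr_cr_adjoint: "f \<in> range P \<Longrightarrow> cr f - fa_star (an f) \<in> csr_ideal"
  unfolding fa_diff_eq_minus[symmetric]
  by (rule star_ideal.gen) (unfold csr_relations_def, blast)

lemma csr_an_adjoint: "f \<in> range P \<Longrightarrow> an f - fa_star (cr f) \<in> csr_ideal"
  using star_ideal_uminus[OF star_ideal.star[OF csr_cr_adjoint[of f]]] by (simp add: fa_star_diff)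

lemma csr_commutator:
  "f1 \<in> range P \<Longrightarrow> f2 \<in> range P \<Longrightarrow> homog H0 H1 a f1 \<Longrightarrow> homog H0 H1 b f2 \<Longrightarrow>
   fa_mult (an f1) (cr f2) - fa_smul (ssign a b) (fa_mult (cr f2) (an f1))
     - fa_smul (ip f1 f2) fa_one \<in> csr_ideal"
  unfolding fa_diff_eq_minus[symmetric]
  by (rule star_ideal.gen) (unfold csr_relations_def, blast)

lemma csr_an_supercommute:
  "f1 \<in> range P \<Longrightarrow> f2 \<in> range P \<Longrightarrow> homog H0 H1 a f1 \<Longrightarrow> homog H0 H1 b f2 \<Longrightarrow>
   fa_mult (an f1) (an f2) - fa_smul (ssign a b) (fa_mult (an f2) (an f1)) \<in> csr_ideal"
  unfolding fa_diff_eq_minus[symmetric]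
  by (rule star_ideal.gen) (unfold csr_relations_def, blast)

lemma csr_cr_supercommute:
  assumes f1: "f1 \<in> range P" and f2: "f2 \<in> range P"
    and a: "homog H0 H1 a f1" and b: "homog H0 H1 b f2"
  shows "fa_mult (cr f1) (cr f2) - fa_smul (ssign a b) (fa_mult (cr f2) (cr f1)) \<in> csr_ideal"
proof -
  let ?s = "ssign a b" and ?F1 = "fa_star (an f1)" and ?F2 = "fa_star (an f2)"
  have adjoint: "fa_mult ?F1 ?F2 - fa_smul ?s (fa_mult ?F2 ?F1) \<in> csr_ideal"
    using star_ideal.star[OF csr_an_supercommute[OF f2 f1 b a]]
    by (simp add: fa_star_diff fa_star_smul fa_star_mult ssign_commute)
  have cong12: "fa_mult (cr f1) (cr f2) - fa_mult ?F1 ?F2 \<in> csr_ideal"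
    and cong21: "fa_mult (cr f2) (cr f1) - fa_mult ?F2 ?F1 \<in> csr_ideal"
    using f1 f2 by (auto intro!: star_ideal_mult_cong csr_cr_adjoint free_star_alg_star
        an_in_csr_alg cr_in_csr_alg)
  have "fa_mult (cr f1) (cr f2) - fa_smul ?s (fa_mult (cr f2) (cr f1)) =
      (fa_mult ?F1 ?F2 - fa_smul ?s (fa_mult ?F2 ?F1)) + (fa_mult (cr f1) (cr f2) - fa_mult ?F1 ?F2)
      - fa_smul ?s (fa_mult (cr f2) (cr f1) - fa_mult ?F2 ?F1)"
    by (simp add: fa_smul_diff)
  also have "\<dots> \<in> csr_ideal"
    by (intro star_ideal_add star_ideal_diff star_ideal.smul adjoint cong12 cong21)
  finally show ?thesis .
qed

lemma csr_an_antilinear: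
  assumes "f1 \<in> range P" and "f2 \<in> range P"
  shows "an (smul c1 f1 + smul c2 f2) - (fa_smul (cnj c1) (an f1) + fa_smul (cnj c2) (an f2))
    \<in> csr_ideal"
proof -
  let ?f = "smul c1 f1 + smul c2 f2"
  have "?f \<in> range P"
    using assms by (simp add: range_P_iff P_add P_smul)
  have eq: "an ?f - (fa_smul (cnj c1) (an f1) + fa_smul (cnj c2) (an f2)) =
      (an ?f - fa_star (cr ?f)) + fa_star (cr ?f - (fa_smul c1 (cr f1) + fa_smul c2 (cr f2)))
      - fa_smul (cnj c1) (an f1 - fa_star (cr f1)) - fa_smul (cnj c2) (an f2 - fa_star (cr f2))"
    by (simp add: fa_star_diff fa_star_add fa_star_smul fa_smul_diff)
  show ?thesis
    unfolding eq
    by (intro star_ideal_add star_ideal_diff star_ideal.star star_ideal.smul csr_an_adjoint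
        csr_cr_linear assms \<open>?f \<in> range P\<close>)
qed

lemma csr_an_uminus: "f \<in> range P \<Longrightarrow> an (- f) + an f \<in> csr_ideal"
  using csr_an_antilinear[of f f "-1" 0] by (simp add: fa_smul_minus_one)

lemma ssr_cr_linear:
  "cr (smul c1 f1 + smul c2 f2) - (fa_smul c1 (cr f1) + fa_smul c2 (cr f2)) \<in> ssr_ideal"
  unfolding fa_diff_eq_minus[symmetric] fa_add_eq_plus[symmetric]
  by (rule star_ideal.gen) (unfold ssr_relations_def, blast)

lemma ssr_cr_adjoint: "cr f - fa_star (an (q f)) \<in> ssr_ideal"
  unfolding fa_diff_eq_minus[symmetric]
  by (rule star_ideal.gen) (unfold ssr_relations_def, blast)

lemma ssr_commutator:
  "homog H0 H1 a f1 \<Longrightarrow> homog H0 H1 b f2 \<Longrightarrow>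
   fa_mult (an f1) (cr f2) - fa_smul (ssign a b) (fa_mult (cr f2) (an f1))
     - fa_smul (ip f1 f2) fa_one \<in> ssr_ideal"
  unfolding fa_diff_eq_minus[symmetric]
  by (rule star_ideal.gen) (unfold ssr_relations_def, blast)

lemma ssr_an_eq_cr: "an f - cr (q (J f)) \<in> ssr_ideal"
  unfolding fa_diff_eq_minus[symmetric]
  by (rule star_ideal.gen) (unfold ssr_relations_def, blast)

lemma ssr_cr_add: "cr (f1 + f2) - (cr f1 + cr f2) \<in> ssr_ideal"
  using ssr_cr_linear[of 1 f1 1 f2] by simp

lemma ssr_cr_uminus: "cr (- f) + cr f \<in> ssr_ideal"
  using ssr_cr_linear[of "-1" f 0 f] by (simp add: fa_smul_minus_one)

definition ssr_to_csr :: "'h cgen \<Rightarrow> 'h cgen fsa" where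
  "ssr_to_csr c =
     (case c of Cr f \<Rightarrow> cr (P f) - an (P (\<gamma> (J f))) | An f \<Rightarrow> cr (P (J f)) + an (P f))"

lemma ssr_to_csr_Cr: "ssr_to_csr (Cr f) = cr (P f) - an (P (\<gamma> (J f)))"
  by (simp add: ssr_to_csr_def)

lemma ssr_to_csr_An: "ssr_to_csr (An f) = cr (P (J f)) + an (P f)"
  by (simp add: ssr_to_csr_def)

lemma fa_lift_ssr_to_csr_cr [simp]:
  "fa_lift ssr_to_csr (cr f) = cr (P f) - an (P (\<gamma> (J f)))"
  by (simp only: fa_lift_gen ssr_to_csr_Cr)

lemma fa_lift_ssr_to_csr_an [simp]: "fa_lift ssr_to_csr (an f) = cr (P (J f)) + an (P f)"
  by (simp only: fa_lift_gen ssr_to_csr_An)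

lemma ssr_to_csr_in_csr_alg: "ssr_to_csr c \<in> free_star_alg (csr_gens P)"
  by (cases c) (auto simp: ssr_to_csr_Cr ssr_to_csr_An
      intro!: free_star_alg_add free_star_alg_diff cr_in_csr_alg an_in_csr_alg)

lemma ssr_relations_in_free_star_alg: "ssr_relations smul ip H0 H1 J P \<subseteq> free_star_alg UNIV"
  by (auto simp: ssr_relations_def free_star_alg_UNIV fa_diff_eq_minus fa_add_eq_plus)

lemma fa_lift_ssr_cr_linear:
  "fa_lift ssr_to_csr (cr (smul c1 f1 + smul c2 f2) - (fa_smul c1 (cr f1) + fa_smul c2 (cr f2)))
   \<in> csr_ideal"
proof -
  let ?x1 = "P f1" and ?x2 = "P f2" and ?y1 = "P (\<gamma> (J f1))" and ?y2 = "P (\<gamma> (J f2))"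
  have eq: "fa_lift ssr_to_csr
        (cr (smul c1 f1 + smul c2 f2) - (fa_smul c1 (cr f1) + fa_smul c2 (cr f2))) =
    (cr (smul c1 ?x1 + smul c2 ?x2) - (fa_smul c1 (cr ?x1) + fa_smul c2 (cr ?x2))) -
    (an (smul (cnj c1) ?y1 + smul (cnj c2) ?y2) -
      (fa_smul (cnj (cnj c1)) (an ?y1) + fa_smul (cnj (cnj c2)) (an ?y2)))"
    by (simp add: fa_lift_simps P_add P_smul J_add J_smul gam_add gam_smul)
      (rule ext, simp add: fa_smul_def algebra_simps)
  show ?thesis
    unfolding eq by (intro star_ideal_diff csr_cr_linear csr_an_antilinear) auto
qed

lemma fa_lift_ssr_cr_adjoint: "fa_lift ssr_to_csr (cr f - fa_star (an (q f))) \<in> csr_ideal"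
proof -
  let ?x = "P f" and ?y = "P (\<gamma> (J f))"
  have range: "?x \<in> range P" "?y \<in> range P" "- ?y \<in> range P"
    by (auto simp: range_P_iff P.minus)
  have eq: "fa_lift ssr_to_csr (cr f - fa_star (an (q f))) =
     (cr ?x - fa_star (an ?x)) + (an (- ?y) - fa_star (cr (- ?y))) - (an (- ?y) + an ?y)"
    by (simp add: fa_lift_simps P_q P_J_q fa_star_add)
  show ?thesis
    unfolding eq
    by (intro star_ideal_add star_ideal_diff csr_cr_adjoint csr_an_adjoint csr_an_uminus range)
qed

lemma fa_lift_ssr_an_eq_cr: "fa_lift ssr_to_csr (an f - cr (q (J f))) \<in> csr_ideal"
proof -
  have eq: "fa_lift ssr_to_csr (an f - cr (q (J f))) = an (- P f) + an (P f)"
    by (simp add: fa_lift_simps P_q P_gam_J_q_J)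
  show ?thesis
    unfolding eq by (rule csr_an_uminus) simp
qed

lemma fa_lift_ssr_commutator:
  assumes a: "homog H0 H1 a f1" and b: "homog H0 H1 b f2"
  shows "fa_lift ssr_to_csr (fa_mult (an f1) (cr f2) - fa_smul (ssign a b) (fa_mult (cr f2) (an f1))
          - fa_smul (ip f1 f2) fa_one) \<in> csr_ideal"
proof -
  let ?s = "ssign a b"
  let ?x1 = "P (J f1)" and ?y1 = "P f1" and ?x2 = "P f2" and ?y2 = "P (\<gamma> (J f2))"
  have range: "?x1 \<in> range P" "?y1 \<in> range P" "?x2 \<in> range P" "?y2 \<in> range P"
    by auto
  have hx1: "homog H0 H1 a ?x1" and hy1: "homog H0 H1 a ?y1"
    and hx2: "homog H0 H1 b ?x2" and hy2: "homog H0 H1 b ?y2"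
    using a b by (simp_all add: homog_P homog_J homog_gam)
  define T1 where "T1 = fa_mult (cr ?x1) (cr ?x2) - fa_smul ?s (fa_mult (cr ?x2) (cr ?x1))"
  define T2 where "T2 = fa_mult (an ?y2) (cr ?x1) - fa_smul ?s (fa_mult (cr ?x1) (an ?y2))
    - fa_smul (ip ?y2 ?x1) fa_one"
  define T3 where "T3 = fa_mult (an ?y1) (cr ?x2) - fa_smul ?s (fa_mult (cr ?x2) (an ?y1))
    - fa_smul (ip ?y1 ?x2) fa_one"
  define T4 where "T4 = fa_mult (an ?y1) (an ?y2) - fa_smul ?s (fa_mult (an ?y2) (an ?y1))"
  have T2: "T2 \<in> csr_ideal"
    unfolding T2_def using csr_commutator[OF range(4,1) hy2 hx1] by (simp add: ssign_commute)
  have T3: "T3 \<in> csr_ideal"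
    unfolding T3_def by (rule csr_commutator[OF range(2,3) hy1 hx2])
  have T4: "T4 \<in> csr_ideal"
    unfolding T4_def by (rule csr_an_supercommute[OF range(2,4) hy1 hy2])
  have T1: "T1 \<in> csr_ideal"
    unfolding T1_def by (rule csr_cr_supercommute[OF range(1,3) hx1 hx2])
  have "ip f1 f2 = ip ?y1 ?x2 + ?s * ip ?y2 ?x1"
    using ip_P_plus_ip_P_gam_J[OF a b] by simp
  moreover have "?s * ?s = 1"
    by (simp add: ssign_def)
  ultimately have eq: "fa_lift ssr_to_csr (fa_mult (an f1) (cr f2)
      - fa_smul ?s (fa_mult (cr f2) (an f1)) - fa_smul (ip f1 f2) fa_one)
      = T1 + fa_smul ?s T2 + T3 - T4"
    unfolding T1_def T2_def T3_def T4_def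
    by (simp add: fa_lift_simps fa_mult_add_left fa_mult_add_right fa_mult_diff_left
        fa_mult_diff_right) (rule ext, simp add: fa_smul_def algebra_simps)
  show ?thesis
    unfolding eq using T1 T2 T3 T4 by (intro star_ideal_add star_ideal_diff star_ideal.smul)
qed

lemma fa_lift_ssr_relation:
  "r \<in> ssr_relations smul ip H0 H1 J P \<Longrightarrow> fa_lift ssr_to_csr r \<in> csr_ideal"
  unfolding ssr_relations_def fa_diff_eq_minus fa_add_eq_plus
  using fa_lift_ssr_cr_linear fa_lift_ssr_cr_adjoint fa_lift_ssr_commutator fa_lift_ssr_an_eq_cr
  by blast

lemma ssr_an_supercommute:
  assumes f1: "P f1 = f1" and f2: "P f2 = f2"
    and a: "homog H0 H1 a f1" and b: "homog H0 H1 b f2"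
  shows "fa_mult (an f1) (an f2) - fa_smul (ssign a b) (fa_mult (an f2) (an f1)) \<in> ssr_ideal"
proof -
  let ?s = "ssign a b" and ?g = "q (J f2)"
  have "homog H0 H1 b ?g"
    using b by (simp add: q_J_range[OF f2] homog_minus homog_gam homog_J)
  then have commutator: "fa_mult (an f1) (cr ?g) - fa_smul ?s (fa_mult (cr ?g) (an f1)) \<in> ssr_ideal"
    using ssr_commutator[OF a, of b ?g] by (simp add: ip_q_J_range[OF f1 f2])
  have "fa_mult (an f1) (an f2) - fa_smul ?s (fa_mult (an f2) (an f1)) =
     fa_mult (an f1) (an f2 - cr ?g) - fa_smul ?s (fa_mult (an f2 - cr ?g) (an f1)) +
     (fa_mult (an f1) (cr ?g) - fa_smul ?s (fa_mult (cr ?g) (an f1)))"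
    by (simp add: fa_mult_diff_left fa_mult_diff_right fa_smul_diff)
  also have "\<dots> \<in> ssr_ideal"
    by (intro star_ideal_add star_ideal_diff star_ideal.smul star_ideal.multl star_ideal.multr
        ssr_an_eq_cr commutator free_star_alg_gen UNIV_I)
  finally show ?thesis .
qed

lemma csr_relations_subset_ssr_ideal: "csr_relations smul ip H0 H1 P \<subseteq> ssr_ideal"
proof
  fix r
  assume "r \<in> csr_relations smul ip H0 H1 P"
  then show "r \<in> ssr_ideal"
    unfolding csr_relations_def
  proof (elim UnE CollectE exE conjE)
    fix c1 c2 f1 f2
    assume "r = fa_diff (cr (smul c1 f1 + smul c2 f2)) (fa_add (fa_smul c1 (cr f1)) (fa_smul c2 (cr f2)))"
    then show ?thesis
      by (simp add: fa_diff_eq_minus fa_add_eq_plus ssr_cr_linear)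
  next
    fix f
    assume "r = fa_diff (cr f) (fa_star (an f))" and "f \<in> range P"
    then show ?thesis
      using ssr_cr_adjoint[of f] by (simp add: fa_diff_eq_minus q_range range_P_iff)
  next
    fix a b f1 f2
    assume "r = fa_diff (fa_diff (fa_mult (an f1) (cr f2)) (fa_smul (ssign a b)
        (fa_mult (cr f2) (an f1)))) (fa_smul (ip f1 f2) fa_one)"
      and "homog H0 H1 a f1" "homog H0 H1 b f2"
    then show ?thesis
      by (simp add: fa_diff_eq_minus ssr_commutator)
  next
    fix a b f1 f2
    assume "r = fa_diff (fa_mult (an f1) (an f2)) (fa_smul (ssign a b) (fa_mult (an f2) (an f1)))"
      and "f1 \<in> range P" "f2 \<in> range P" "homog H0 H1 a f1" "homog H0 H1 b f2"
    then show ?thesis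
      by (simp add: fa_diff_eq_minus range_P_iff ssr_an_supercommute)
  qed
qed

lemma ssr_to_csr_congruent_ssr: "ssr_to_csr c - fa_gen c \<in> ssr_ideal"
proof (cases c)
  case (Cr f)
  let ?y = "P (\<gamma> (J f))" and ?u = "f - P f"
  have an_y: "an ?y - cr (- ?u) \<in> ssr_ideal"
    using ssr_an_eq_cr[of ?y] by (simp add: q_J_P_gam_J)
  have cr_f: "cr f - (cr (P f) + cr ?u) \<in> ssr_ideal"
    using ssr_cr_add[of "P f" ?u] by simp
  have "ssr_to_csr c - fa_gen c = - (an ?y - cr (- ?u)) - (cr (- ?u) + cr ?u) - (cr f - (cr (P f) + cr ?u))"
    by (simp add: Cr ssr_to_csr_Cr algebra_simps)
  also have "\<dots> \<in> ssr_ideal"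
    by (intro star_ideal_diff star_ideal_uminus an_y ssr_cr_uminus cr_f)
  finally show ?thesis .
next
  case (An f)
  have cr_q_J: "cr (q (J f)) - (cr (P (J f)) + cr (q (J (P f)))) \<in> ssr_ideal"
    using ssr_cr_add[of "P (J f)" "q (J (P f))"] by (simp add: q_J_eq[symmetric])
  have "ssr_to_csr c - fa_gen c = (an (P f) - cr (q (J (P f)))) - (an f - cr (q (J f)))
      - (cr (q (J f)) - (cr (P (J f)) + cr (q (J (P f)))))"
    by (simp add: An ssr_to_csr_An algebra_simps)
  also have "\<dots> \<in> ssr_ideal"
    by (intro star_ideal_diff ssr_an_eq_cr cr_q_J)
  finally show ?thesis .
qed

lemma ssr_to_csr_congruent_csr:
  assumes "c \<in> csr_gens P"
  shows "ssr_to_csr c - fa_gen c \<in> csr_ideal"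
proof -
  obtain f where "f \<in> range P" and c: "c = Cr f \<or> c = An f"
    using assms by (auto simp: csr_gens_def)
  then have "P f = f"
    by (simp add: range_P_iff)
  have zero: "0 \<in> range P"
    by (simp add: range_P_iff P.zero)
  from c show ?thesis
  proof
    assume "c = Cr f"
    then have "ssr_to_csr c - fa_gen c = - an 0"
      using \<open>P f = f\<close> by (simp add: ssr_to_csr_Cr P_gam_J_range)
    then show ?thesis
      using csr_an_antilinear[OF zero zero, of 0 0] by (simp add: star_ideal_uminus)
  next
    assume "c = An f"
    then have "ssr_to_csr c - fa_gen c = cr 0"
      using \<open>P f = f\<close> by (simp add: ssr_to_csr_An P_J_range)
    then show ?thesis
      using csr_cr_linear[OF zero zero, of 0 0] by simp
  qed
qed

theorem ssr_csr_quot_star_isomorphic: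
  "quot_star_isomorphic UNIV ssr_ideal (csr_gens P) csr_ideal"
  by (rule quot_star_isomorphic_by_lift[where \<phi>=ssr_to_csr])
    (simp_all add: ssr_relations_in_free_star_alg ssr_to_csr_in_csr_alg fa_lift_ssr_relation
      csr_relations_subset_ssr_ideal ssr_to_csr_congruent_ssr ssr_to_csr_congruent_csr)

end

theorem lemma1:
  fixes smul :: "complex \<Rightarrow> 'h::ab_group_add \<Rightarrow> 'h"
    and ip :: "'h \<Rightarrow> 'h \<Rightarrow> complex"
    and H0 H1 :: "'h set"
    and J P :: "'h \<Rightarrow> 'h"
  assumes "graded_hilbert smul ip H0 H1"
    and "even_conjugation smul ip H0 H1 J"
    and "even_orth_projection smul ip H0 H1 P"
    and "\<forall>x. J (P x) = J x - P (J x)"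
  shows "quot_star_isomorphic
           (UNIV :: 'h cgen set) (star_ideal UNIV (ssr_relations smul ip H0 H1 J P))
           (csr_gens P) (star_ideal (csr_gens P) (csr_relations smul ip H0 H1 P))"
proof -
  interpret basis_projection smul ip H0 H1 J P
    using assms by unfold_locales
  show ?thesis
    by (rule ssr_csr_quot_star_isomorphic)
qed

end
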